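(* Let $X$ be a real random variable with density $p$, $\mathbb{E}X=0$, $\mathrm{Var}(X)=1$, $\mathbb{E}|X|^s<\infty$ for some $s>2$, and suppose $\|p-\phi\|_2\le1$. Then there exist $C_1,C_2>0$ such that \[ D(X)\le C_1\big(\|p-\phi\|_1+\|p-\phi\|_2\big)+C_2(\mathbb{E}|X|^s)^{2/s}\big(\|p-\phi\|_1+\|p-\phi\|_2\big)^{1-2/s}. \]
   Context: $\phi(x)=(2\pi)^{-1/2}e^{-x^2/2}$. $D(X)$ denotes the Kullback–Leibler divergence of $X$ from a Gaussian with the same mean and variance as $X$; here $D(X)=\int p\ln(p/\phi)$. $\|\cdot\|_q$ is the $L^q(\mathbb{R})$ norm. *)

theory Defs
  imports "HOL-Probability.Probability"
begin

definition is_density :: "(real \<Rightarrow> real) \<Rightarrow> bool" where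
  "is_density p \<longleftrightarrow> p \<in> borel_measurable lborel \<and> (\<forall>x. 0 \<le> p x)
     \<and> integrable lborel p \<and> (\<integral>x. p x \<partial>lborel) = 1"

definition L1norm :: "(real \<Rightarrow> real) \<Rightarrow> real" where
  "L1norm f = (\<integral>x. \<bar>f x\<bar> \<partial>lborel)"

definition L2norm :: "(real \<Rightarrow> real) \<Rightarrow> real" where
  "L2norm f = sqrt (\<integral>x. (f x)\<^sup>2 \<partial>lborel)"

text \<open>Relative entropy of the density p from the standard Gaussian,
  D = integral of p ln (p / phi), with the convention 0 ln 0 = 0.\<close>
definition rel_entropy_gauss :: "(real \<Rightarrow> real) \<Rightarrow> real" where
  "rel_entropy_gauss p = (\<integral>x. p x * ln (p x / std_normal_density x) \<partial>lborel)"

end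

theory Submission
  imports Defs
begin

text \<open>Pointwise, \<open>p ln (p/\<phi>) \<le> (p - \<phi>)\<^sup>2 + \<bar>p - \<phi>\<bar> (3 + x\<^sup>2/2)\<close>, using
  \<open>ln t \<le> t - 1\<close> and \<open>-ln \<phi>(x) \<le> x\<^sup>2/2 + 2\<close>; hence
  \<open>D \<le> \<parallel>p - \<phi>\<parallel>\<^sub>2\<^sup>2 + 3 \<parallel>p - \<phi>\<parallel>\<^sub>1 + \<integral> x\<^sup>2 \<bar>p - \<phi>\<bar> / 2\<close>.
  Splitting the last integral at \<open>\<bar>x\<bar> = R\<close> bounds it by \<open>R\<^sup>2 \<parallel>p - \<phi>\<parallel>\<^sub>1 + R\<^bsup>2-s\<^esup> (M + K)\<close>,
  where \<open>M = E\<bar>X\<bar>\<^sup>s\<close> and \<open>K = E\<bar>Z\<bar>\<^sup>s\<close> for a standard Gaussian \<open>Z\<close>; optimising over \<open>R\<close>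
  gives \<open>2 \<parallel>p - \<phi>\<parallel>\<^sub>1\<^bsup>1-2/s\<^esup> (M + K)\<^bsup>2/s\<^esup>\<close>. Finally \<open>M \<ge> (E X\<^sup>2)\<^bsup>s/2\<^esup> = 1\<close>, so
  \<open>M + K \<le> (1 + K) M\<close>, and the theorem holds with \<open>C\<^sub>1 = 3\<close> and \<open>C\<^sub>2 = (1 + K)\<^bsup>2/s\<^esup>\<close>.\<close>

lemma square_le_abs_powr_Young:
  fixes s x :: real
  assumes "s \<ge> 2"
  shows "x\<^sup>2 \<le> (2/s) * \<bar>x\<bar> powr s + (1 - 2/s)"
proof (cases "x = 0")
  case True
  then show ?thesis using assms by simp
next
  case False
  have "(\<bar>x\<bar> powr s) powr (2/s) * 1 powr (1 - 2/s) \<le> (2/s) * \<bar>x\<bar> powr s + (1 - 2/s) * 1"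
    using assms False by (intro Youngs_inequality_0) auto
  moreover have "(\<bar>x\<bar> powr s) powr (2/s) = x\<^sup>2"
    using assms False by (simp add: powr_powr)
  ultimately show ?thesis by simp
qed

lemma square_le_truncated_abs_powr:
  fixes R s x :: real
  assumes "R > 0" "s \<ge> 2"
  shows "x\<^sup>2 \<le> R\<^sup>2 + R powr (2 - s) * \<bar>x\<bar> powr s"
proof (cases "\<bar>x\<bar> \<le> R")
  case True
  then have "\<bar>x\<bar>\<^sup>2 \<le> R\<^sup>2" by (intro power_mono) auto
  then show ?thesis using assms by (simp add: add_increasing2)
next
  case False
  have "x\<^sup>2 = \<bar>x\<bar> powr (2 - s) * \<bar>x\<bar> powr s"
    using False assms by (simp add: powr_add [symmetric])
  also have "\<dots> \<le> R powr (2 - s) * \<bar>x\<bar> powr s"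
    using False assms by (intro mult_right_mono powr_mono2') auto
  finally show ?thesis by (simp add: add_increasing)
qed

lemma diff_le_mult_ln_divide:
  fixes p q :: real
  assumes "p \<ge> 0" "q > 0"
  shows "p - q \<le> p * ln (p / q)"
proof (cases "p = 0")
  case True
  then show ?thesis using assms by simp
next
  case False
  then have "p > 0" using assms by simp
  have "p * ln (q / p) \<le> p * (q / p - 1)"
    using \<open>p > 0\<close> assms by (intro mult_left_mono ln_le_minus_one) auto
  also have "\<dots> = q - p" using \<open>p > 0\<close> by (simp add: field_simps)
  finally show ?thesis using \<open>p > 0\<close> assms by (simp add: ln_div algebra_simps)
qed

lemma mult_ln_divide_le:
  fixes p q L :: real
  assumes "p \<ge> 0" "q > 0" "q \<le> 1" "- ln q \<le> L"
  shows "p * ln (p / q) \<le> (p - q)\<^sup>2 + \<bar>p - q\<bar> * (1 + L)"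
proof (cases "p \<ge> q")
  case True
  then have "p > 0" using assms by simp
  have "q * ln (p / q) \<le> q * (p / q - 1)"
    using assms \<open>p > 0\<close> by (intro mult_left_mono ln_le_minus_one) auto
  also have "\<dots> = p - q" using assms by (simp add: field_simps)
  finally have "p * ln (p / q) \<le> (p - q) * (1 + ln (p / q))"
    by (simp add: algebra_simps)
  also have "\<dots> \<le> (p - q) * ((p - q) + 1 + L)"
  proof (intro mult_left_mono)
    have "ln p \<le> p - 1" using \<open>p > 0\<close> by (rule ln_le_minus_one)
    then show "1 + ln (p / q) \<le> (p - q) + 1 + L"
      using assms \<open>p > 0\<close> by (simp add: ln_div)
  qed (use True in simp)
  finally show ?thesis using True by (simp add: power2_eq_square algebra_simps)
next
  case False
  have "ln q \<le> 0" using assms by simp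
  then have "0 \<le> 1 + L" using assms by linarith
  then have "0 \<le> (p - q)\<^sup>2 + \<bar>p - q\<bar> * (1 + L)" by simp
  moreover have "p * ln (p / q) \<le> 0"
    using False assms by (cases "p = 0") (auto intro: mult_nonneg_nonpos)
  ultimately show ?thesis by linarith
qed

lemma powr_balance:
  fixes A B s :: real
  assumes "A > 0" "B > 0" "s \<noteq> 0"
  shows "((B / A) powr (1/s))\<^sup>2 * A = A powr (1 - 2/s) * B powr (2/s)"
    and "((B / A) powr (1/s)) powr (2 - s) * B = A powr (1 - 2/s) * B powr (2/s)"
  using assms
  by (subst ln_inj_iff [symmetric]; simp add: ln_mult ln_div ln_realpow field_simps)+

lemma std_normal_density_le_one: "std_normal_density x \<le> 1"
proof -
  have "exp (- (x\<^sup>2 / 2)) \<le> 1" "1 \<le> sqrt (2 * pi)" using pi_gt3 by auto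
  then have "exp (- (x\<^sup>2 / 2)) \<le> sqrt (2 * pi)" by linarith
  then show ?thesis unfolding std_normal_density_def by simp
qed

lemma minus_ln_std_normal_density_le: "- ln (std_normal_density x) \<le> x\<^sup>2 / 2 + 2"
proof -
  have "sqrt (2 * pi) \<le> sqrt (3\<^sup>2)" using pi_less_4 by (intro real_sqrt_le_mono) simp
  then have "ln (sqrt (2 * pi)) \<le> 2"
    using ln_le_minus_one[of "sqrt (2 * pi)"] pi_gt3 by simp
  then show ?thesis by (simp add: std_normal_density_def ln_mult ln_div)
qed

lemma integrable_std_normal_abs_powr:
  fixes s :: real
  assumes "s \<ge> 0"
  shows "integrable lborel (\<lambda>x. \<bar>x\<bar> powr s * std_normal_density x)"
proof (rule Bochner_Integration.integrable_bound)
  define k where "k = nat \<lceil>s\<rceil>"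
  show "integrable lborel (\<lambda>x. std_normal_density x + std_normal_density x * \<bar>x\<bar> ^ k)"
    by (intro Bochner_Integration.integrable_add integrable_std_normal_moment_abs
        integrable_normal_density) auto
  have "\<bar>x\<bar> powr s * std_normal_density x \<le> (1 + \<bar>x\<bar> ^ k) * std_normal_density x"
    for x :: real
  proof (intro mult_right_mono)
    show "\<bar>x\<bar> powr s \<le> 1 + \<bar>x\<bar> ^ k"
    proof (cases "\<bar>x\<bar> \<le> 1")
      case True
      then show ?thesis using assms powr_mono2[of s "\<bar>x\<bar>" 1] by (simp add: add_increasing2)
    next
      case False
      then have "\<bar>x\<bar> powr s \<le> \<bar>x\<bar> powr (real k)" unfolding k_def by (intro powr_mono) linarith+
      then show ?thesis using False by (simp add: powr_realpow)
    qed
  qed simp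
  then show "AE x in lborel. norm (\<bar>x\<bar> powr s * std_normal_density x)
      \<le> norm (std_normal_density x + std_normal_density x * \<bar>x\<bar> ^ k)"
    by (intro AE_I2) (simp add: algebra_simps)
qed measurable

lemma integrable_abs_diff_std_normal:
  assumes "integrable lborel p"
  shows "integrable lborel (\<lambda>x. \<bar>p x - std_normal_density x\<bar>)"
  using assms by (intro integrable_abs Bochner_Integration.integrable_diff integrable_normal_density) simp_all

lemma integrable_square_mult_abs_diff_std_normal:
  assumes "integrable lborel (\<lambda>x. x\<^sup>2 * p x)"
  shows "integrable lborel (\<lambda>x. x\<^sup>2 * \<bar>p x - std_normal_density x\<bar>)"
proof -
  have "integrable lborel (\<lambda>x. \<bar>x\<^sup>2 * p x - x\<^sup>2 * std_normal_density x\<bar>)"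
    using assms integrable_std_normal_moment[of 2]
    by (intro integrable_abs Bochner_Integration.integrable_diff) (simp_all add: mult.commute)
  then show ?thesis by (simp add: abs_mult right_diff_distrib [symmetric])
qed

lemma one_le_abs_moment:
  fixes p :: "real \<Rightarrow> real" and s :: real
  assumes "s \<ge> 2" and p: "is_density p"
    and "integrable lborel (\<lambda>x. x\<^sup>2 * p x)" "(\<integral>x. x\<^sup>2 * p x \<partial>lborel) = 1"
    and "integrable lborel (\<lambda>x. \<bar>x\<bar> powr s * p x)"
  shows "1 \<le> (\<integral>x. \<bar>x\<bar> powr s * p x \<partial>lborel)"
proof -
  have p_int: "integrable lborel p" and "\<And>x. 0 \<le> p x" and "(\<integral>x. p x \<partial>lborel) = 1"
    using p unfolding is_density_def by auto
  have "1 = (\<integral>x. x\<^sup>2 * p x \<partial>lborel)" using assms by simp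
  also have "\<dots> \<le> (\<integral>x. (2/s) * (\<bar>x\<bar> powr s * p x) + (1 - 2/s) * p x \<partial>lborel)"
  proof (intro integral_mono Bochner_Integration.integrable_add integrable_mult_right assms)
    fix x
    have "x\<^sup>2 * p x \<le> ((2/s) * \<bar>x\<bar> powr s + (1 - 2/s)) * p x"
      using square_le_abs_powr_Young \<open>s \<ge> 2\<close> \<open>0 \<le> p x\<close> by (intro mult_right_mono)
    then show "x\<^sup>2 * p x \<le> (2/s) * (\<bar>x\<bar> powr s * p x) + (1 - 2/s) * p x"
      by (simp add: algebra_simps)
  qed (simp add: p_int)
  also have "\<dots> = (2/s) * (\<integral>x. \<bar>x\<bar> powr s * p x \<partial>lborel) + (1 - 2/s)"
    using assms p_int \<open>(\<integral>x. p x \<partial>lborel) = 1\<close> by simp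
  finally show ?thesis using \<open>s \<ge> 2\<close> by (simp add: field_simps)
qed

lemma second_moment_le_truncation:
  fixes f g :: "real \<Rightarrow> real" and R s :: real
  assumes "R > 0" "s \<ge> 2"
    and f: "integrable lborel f" "integrable lborel (\<lambda>x. x\<^sup>2 * f x)"
    and g: "integrable lborel (\<lambda>x. \<bar>x\<bar> powr s * g x)"
    and f_nonneg: "\<And>x. 0 \<le> f x" and f_le_g: "\<And>x. f x \<le> g x"
  shows "(\<integral>x. x\<^sup>2 * f x \<partial>lborel)
    \<le> R\<^sup>2 * (\<integral>x. f x \<partial>lborel) + R powr (2 - s) * (\<integral>x. \<bar>x\<bar> powr s * g x \<partial>lborel)"
proof -
  have "(\<integral>x. x\<^sup>2 * f x \<partial>lborel) \<le> (\<integral>x. R\<^sup>2 * f x + R powr (2 - s) * (\<bar>x\<bar> powr s * g x) \<partial>lborel)"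
  proof (intro integral_mono Bochner_Integration.integrable_add integrable_mult_right f g)
    fix x
    have "x\<^sup>2 * f x \<le> (R\<^sup>2 + R powr (2 - s) * \<bar>x\<bar> powr s) * f x"
      using square_le_truncated_abs_powr assms(1,2) f_nonneg by (intro mult_right_mono)
    also have "\<dots> \<le> R\<^sup>2 * f x + R powr (2 - s) * (\<bar>x\<bar> powr s * g x)"
      using f_le_g[of x] by (simp add: distrib_right mult.assoc mult_left_mono)
    finally show "x\<^sup>2 * f x \<le> R\<^sup>2 * f x + R powr (2 - s) * (\<bar>x\<bar> powr s * g x)" .
  qed
  then show ?thesis using f g by simp
qed

lemma second_moment_interpolation:
  fixes f g :: "real \<Rightarrow> real" and s :: real
  assumes "s \<ge> 2"
    and f: "integrable lborel f" "integrable lborel (\<lambda>x. x\<^sup>2 * f x)"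
    and g: "integrable lborel (\<lambda>x. \<bar>x\<bar> powr s * g x)"
    and f_nonneg: "\<And>x. 0 \<le> f x" and f_le_g: "\<And>x. f x \<le> g x"
  shows "(\<integral>x. x\<^sup>2 * f x \<partial>lborel)
    \<le> 2 * (\<integral>x. f x \<partial>lborel) powr (1 - 2/s) * (\<integral>x. \<bar>x\<bar> powr s * g x \<partial>lborel) powr (2/s)"
proof -
  define A where "A = (\<integral>x. f x \<partial>lborel)"
  define B where "B = (\<integral>x. \<bar>x\<bar> powr s * g x \<partial>lborel)"
  have g_nonneg: "0 \<le> g x" for x using f_nonneg f_le_g by (rule order_trans)
  have "A \<ge> 0" "B \<ge> 0"
    unfolding A_def B_def using f_nonneg g_nonneg by (auto intro!: integral_nonneg_AE)
  show ?thesis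
  proof (cases "A > 0 \<and> B > 0")
    case True
    define R where "R = (B / A) powr (1/s)"
    have "R > 0" using True unfolding R_def by simp
    have "(\<integral>x. x\<^sup>2 * f x \<partial>lborel) \<le> R\<^sup>2 * A + R powr (2 - s) * B"
      unfolding A_def B_def using second_moment_le_truncation[OF \<open>R > 0\<close> assms] .
    also have "\<dots> = 2 * A powr (1 - 2/s) * B powr (2/s)"
      using powr_balance[of A B s] True \<open>s \<ge> 2\<close> unfolding R_def by simp
    finally show ?thesis unfolding A_def B_def .
  next
    case False
    have "AE x in lborel. f x = 0"
    proof (cases "A = 0")
      case True
      then show ?thesis
        using f f_nonneg unfolding A_def by (simp add: integral_nonneg_eq_0_iff_AE)
    next
      case False
      with \<open>\<not> (A > 0 \<and> B > 0)\<close> \<open>A \<ge> 0\<close> \<open>B \<ge> 0\<close> have "B = 0" by simp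
      then have "AE x in lborel. \<bar>x\<bar> powr s * g x = 0"
        using g g_nonneg unfolding B_def by (subst (asm) integral_nonneg_eq_0_iff_AE) auto
      then show ?thesis
        using AE_lborel_singleton[of 0]
      proof eventually_elim
        case (elim x)
        then show ?case using f_nonneg[of x] f_le_g[of x] by (simp add: antisym)
      qed
    qed
    then have "(\<integral>x. x\<^sup>2 * f x \<partial>lborel) = 0" by (auto intro: integral_eq_zero_AE)
    then show ?thesis by simp
  qed
qed

lemma rel_entropy_gauss_le:
  fixes p :: "real \<Rightarrow> real"
  assumes p_meas: "p \<in> borel_measurable lborel" and p_nonneg: "\<And>x. 0 \<le> p x"
    and p_int: "integrable lborel p"
    and sq_int: "integrable lborel (\<lambda>x. (p x - std_normal_density x)\<^sup>2)"
    and x2_int: "integrable lborel (\<lambda>x. x\<^sup>2 * p x)"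
  shows "integrable lborel (\<lambda>x. p x * ln (p x / std_normal_density x))"
    and "rel_entropy_gauss p \<le> (L2norm (\<lambda>x. p x - std_normal_density x))\<^sup>2
      + 3 * L1norm (\<lambda>x. p x - std_normal_density x)
      + 1/2 * (\<integral>x. x\<^sup>2 * \<bar>p x - std_normal_density x\<bar> \<partial>lborel)"
proof -
  let ?\<phi> = std_normal_density
  have [measurable]: "p \<in> borel_measurable borel" using p_meas by simp
  note abs_int = integrable_abs_diff_std_normal[OF p_int]
  note x2_abs_int = integrable_square_mult_abs_diff_std_normal[OF x2_int]
  define g where "g x = (p x - ?\<phi> x)\<^sup>2 + 3 * \<bar>p x - ?\<phi> x\<bar> + 1/2 * (x\<^sup>2 * \<bar>p x - ?\<phi> x\<bar>)" for x
  have g_int: "integrable lborel g"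
    unfolding g_def by (intro Bochner_Integration.integrable_add integrable_mult_right sq_int abs_int x2_abs_int)
  have upper: "p x * ln (p x / ?\<phi> x) \<le> g x" for x
  proof -
    have "p x * ln (p x / ?\<phi> x) \<le> (p x - ?\<phi> x)\<^sup>2 + \<bar>p x - ?\<phi> x\<bar> * (1 + (x\<^sup>2 / 2 + 2))"
      by (intro mult_ln_divide_le p_nonneg std_normal_density_le_one
          minus_ln_std_normal_density_le) (simp add: normal_density_pos)
    also have "\<dots> = g x" by (simp add: g_def algebra_simps)
    finally show ?thesis .
  qed
  have lower: "- g x \<le> p x * ln (p x / ?\<phi> x)" for x
  proof -
    have "\<bar>p x - ?\<phi> x\<bar> \<le> g x"
      unfolding g_def by (simp add: add_increasing add_increasing2)
    then have "- g x \<le> p x - ?\<phi> x" by linarith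
    also have "\<dots> \<le> p x * ln (p x / ?\<phi> x)"
      by (intro diff_le_mult_ln_divide p_nonneg) (simp add: normal_density_pos)
    finally show ?thesis .
  qed
  show entropy_int: "integrable lborel (\<lambda>x. p x * ln (p x / ?\<phi> x))"
  proof (rule Bochner_Integration.integrable_bound[OF g_int])
    have "\<bar>p x * ln (p x / ?\<phi> x)\<bar> \<le> g x" for x
      using upper[of x] lower[of x] by linarith
    then show "AE x in lborel. norm (p x * ln (p x / ?\<phi> x)) \<le> norm (g x)"
      by (intro AE_I2) (simp add: order_trans[OF _ abs_ge_self])
  qed measurable
  have "rel_entropy_gauss p \<le> (\<integral>x. g x \<partial>lborel)"
    unfolding rel_entropy_gauss_def by (intro integral_mono entropy_int g_int upper)
  also have "\<dots> = (\<integral>x. (p x - ?\<phi> x)\<^sup>2 \<partial>lborel) + 3 * L1norm (\<lambda>x. p x - ?\<phi> x)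
      + 1/2 * (\<integral>x. x\<^sup>2 * \<bar>p x - ?\<phi> x\<bar> \<partial>lborel)"
    unfolding g_def L1norm_def using sq_int abs_int x2_abs_int by simp
  also have "(\<integral>x. (p x - ?\<phi> x)\<^sup>2 \<partial>lborel) = (L2norm (\<lambda>x. p x - ?\<phi> x))\<^sup>2"
    unfolding L2norm_def by (simp add: integral_nonneg_AE)
  finally show "rel_entropy_gauss p \<le> (L2norm (\<lambda>x. p x - ?\<phi> x))\<^sup>2
      + 3 * L1norm (\<lambda>x. p x - ?\<phi> x) + 1/2 * (\<integral>x. x\<^sup>2 * \<bar>p x - ?\<phi> x\<bar> \<partial>lborel)" .
qed

lemma second_moment_abs_diff_std_normal_le:
  fixes p :: "real \<Rightarrow> real" and s :: real
  defines "M \<equiv> \<integral>x. \<bar>x\<bar> powr s * p x \<partial>lborel"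
    and "K \<equiv> \<integral>x. \<bar>x\<bar> powr s * std_normal_density x \<partial>lborel"
  assumes "s \<ge> 2" and p_nonneg: "\<And>x. 0 \<le> p x" and p_int: "integrable lborel p"
    and x2_int: "integrable lborel (\<lambda>x. x\<^sup>2 * p x)"
    and s_int: "integrable lborel (\<lambda>x. \<bar>x\<bar> powr s * p x)" and "M \<ge> 1"
  shows "(\<integral>x. x\<^sup>2 * \<bar>p x - std_normal_density x\<bar> \<partial>lborel)
    \<le> 2 * (1 + K) powr (2/s) * M powr (2/s) * L1norm (\<lambda>x. p x - std_normal_density x) powr (1 - 2/s)"
proof -
  let ?\<phi> = std_normal_density
  have K_int: "integrable lborel (\<lambda>x. \<bar>x\<bar> powr s * ?\<phi> x)"
    using \<open>s \<ge> 2\<close> by (intro integrable_std_normal_abs_powr) simp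
  have "K \<ge> 0" unfolding K_def by (intro integral_nonneg_AE) simp
  have sum_int: "integrable lborel (\<lambda>x. \<bar>x\<bar> powr s * (p x + ?\<phi> x))"
    using s_int K_int by (simp add: distrib_left)
  have abs_le_sum: "\<bar>p x - ?\<phi> x\<bar> \<le> p x + ?\<phi> x" for x
    using p_nonneg[of x] normal_density_nonneg[of 0 1 x] by linarith
  have "(\<integral>x. x\<^sup>2 * \<bar>p x - ?\<phi> x\<bar> \<partial>lborel)
      \<le> 2 * L1norm (\<lambda>x. p x - ?\<phi> x) powr (1 - 2/s) * (\<integral>x. \<bar>x\<bar> powr s * (p x + ?\<phi> x) \<partial>lborel) powr (2/s)"
    unfolding L1norm_def
    by (rule second_moment_interpolation[OF \<open>s \<ge> 2\<close> integrable_abs_diff_std_normal[OF p_int]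
        integrable_square_mult_abs_diff_std_normal[OF x2_int] sum_int abs_ge_zero abs_le_sum])
  also have "\<dots> = 2 * L1norm (\<lambda>x. p x - ?\<phi> x) powr (1 - 2/s) * (M + K) powr (2/s)"
    using s_int K_int unfolding M_def K_def by (simp add: distrib_left)
  also have "\<dots> \<le> 2 * L1norm (\<lambda>x. p x - ?\<phi> x) powr (1 - 2/s) * ((1 + K) powr (2/s) * M powr (2/s))"
  proof (intro mult_left_mono)
    have "M + K \<le> (1 + K) * M"
      using \<open>M \<ge> 1\<close> \<open>K \<ge> 0\<close> mult_left_mono[of 1 M K] by (simp add: algebra_simps)
    then show "(M + K) powr (2/s) \<le> (1 + K) powr (2/s) * M powr (2/s)"
      using \<open>M \<ge> 1\<close> \<open>K \<ge> 0\<close> \<open>s \<ge> 2\<close> by (simp add: powr_mult [symmetric] powr_mono2)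
  qed simp
  finally show ?thesis by (simp add: ac_simps)
qed

lemma rel_entropy_gauss_le_moment_interpolation:
  fixes p :: "real \<Rightarrow> real" and s :: real
  defines "\<epsilon> \<equiv> L1norm (\<lambda>x. p x - std_normal_density x) + L2norm (\<lambda>x. p x - std_normal_density x)"
    and "K \<equiv> \<integral>x. \<bar>x\<bar> powr s * std_normal_density x \<partial>lborel"
  assumes "s \<ge> 2" and p: "is_density p"
    and x2_int: "integrable lborel (\<lambda>x. x\<^sup>2 * p x)" and x2_one: "(\<integral>x. x\<^sup>2 * p x \<partial>lborel) = 1"
    and s_int: "integrable lborel (\<lambda>x. \<bar>x\<bar> powr s * p x)"
    and sq_int: "integrable lborel (\<lambda>x. (p x - std_normal_density x)\<^sup>2)"
    and L2_le: "L2norm (\<lambda>x. p x - std_normal_density x) \<le> 1"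
  shows "rel_entropy_gauss p \<le> 3 * \<epsilon>
    + (1 + K) powr (2/s) * (\<integral>x. \<bar>x\<bar> powr s * p x \<partial>lborel) powr (2/s) * \<epsilon> powr (1 - 2/s)"
proof -
  let ?\<phi> = std_normal_density
  define L1 where "L1 = L1norm (\<lambda>x. p x - ?\<phi> x)"
  define L2 where "L2 = L2norm (\<lambda>x. p x - ?\<phi> x)"
  define C where "C = (1 + K) powr (2/s) * (\<integral>x. \<bar>x\<bar> powr s * p x \<partial>lborel) powr (2/s)"
  define I where "I = (\<integral>x. x\<^sup>2 * \<bar>p x - ?\<phi> x\<bar> \<partial>lborel)"
  have p_meas: "p \<in> borel_measurable lborel" and p_nonneg: "\<And>x. 0 \<le> p x"
    and p_int: "integrable lborel p"
    using p unfolding is_density_def by auto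
  have "L1 \<ge> 0" unfolding L1_def L1norm_def by (intro integral_nonneg_AE) simp
  have "L2 \<ge> 0" unfolding L2_def L2norm_def by simp
  have "C \<ge> 0" unfolding C_def by simp
  have "rel_entropy_gauss p \<le> L2\<^sup>2 + 3 * L1 + 1/2 * I"
    unfolding L1_def L2_def I_def using rel_entropy_gauss_le(2)[OF p_meas p_nonneg p_int sq_int x2_int] .
  moreover have "I \<le> 2 * C * L1 powr (1 - 2/s)"
    unfolding I_def C_def K_def L1_def
    using second_moment_abs_diff_std_normal_le[OF \<open>s \<ge> 2\<close> p_nonneg p_int x2_int s_int
        one_le_abs_moment[OF \<open>s \<ge> 2\<close> p x2_int x2_one s_int]]
    by (simp only: mult.assoc)
  moreover have "L1 powr (1 - 2/s) \<le> \<epsilon> powr (1 - 2/s)"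
    using \<open>s \<ge> 2\<close> \<open>L1 \<ge> 0\<close> \<open>L2 \<ge> 0\<close> unfolding \<epsilon>_def L1_def L2_def by (intro powr_mono2) auto
  then have "C * L1 powr (1 - 2/s) \<le> C * \<epsilon> powr (1 - 2/s)"
    using \<open>C \<ge> 0\<close> by (rule mult_left_mono)
  moreover have "L2\<^sup>2 \<le> L2"
    using \<open>L2 \<ge> 0\<close> L2_le unfolding L2_def by (simp add: power2_eq_square mult_left_le)
  moreover have "\<epsilon> = L1 + L2" unfolding \<epsilon>_def L1_def L2_def ..
  ultimately show ?thesis
    using \<open>L1 \<ge> 0\<close> \<open>L2 \<ge> 0\<close> unfolding C_def by linarith
qed

theorem corollary2p4:
  fixes s :: real
  assumes "s > 2"
  shows "\<exists>C1 C2. C1 > 0 \<and> C2 > 0 \<and>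
    (\<forall>p :: real \<Rightarrow> real.
       is_density p
       \<and> integrable lborel (\<lambda>x. x * p x) \<and> (\<integral>x. x * p x \<partial>lborel) = 0
       \<and> integrable lborel (\<lambda>x. x\<^sup>2 * p x) \<and> (\<integral>x. x\<^sup>2 * p x \<partial>lborel) = 1
       \<and> integrable lborel (\<lambda>x. \<bar>x\<bar> powr s * p x)
       \<and> integrable lborel (\<lambda>x. (p x - std_normal_density x)\<^sup>2)
       \<and> L2norm (\<lambda>x. p x - std_normal_density x) \<le> 1
     \<longrightarrow> integrable lborel (\<lambda>x. p x * ln (p x / std_normal_density x))
       \<and> rel_entropy_gauss p \<le>
           C1 * (L1norm (\<lambda>x. p x - std_normal_density x) + L2norm (\<lambda>x. p x - std_normal_density x))
         + C2 * (\<integral>x. \<bar>x\<bar> powr s * p x \<partial>lborel) powr (2 / s)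
              * (L1norm (\<lambda>x. p x - std_normal_density x) + L2norm (\<lambda>x. p x - std_normal_density x)) powr (1 - 2 / s))"
proof -
  define K where "K = (\<integral>x. \<bar>x\<bar> powr s * std_normal_density x \<partial>lborel)"
  have "K \<ge> 0" unfolding K_def by (intro integral_nonneg_AE) simp
  then have "(1 + K) powr (2/s) > 0" by simp
  moreover have "integrable lborel (\<lambda>x. p x * ln (p x / std_normal_density x))"
    if "is_density p" "integrable lborel (\<lambda>x. (p x - std_normal_density x)\<^sup>2)"
      "integrable lborel (\<lambda>x. x\<^sup>2 * p x)" for p
    using that rel_entropy_gauss_le(1) unfolding is_density_def by blast
  moreover note rel_entropy_gauss_le_moment_interpolation[of s, folded K_def]
  ultimately show ?thesis
    using \<open>s > 2\<close> by (intro exI[of _ 3] exI[of _ "(1 + K) powr (2/s)"]) auto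
qed

end
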